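(* Let $T$ be a light tournament and let $z$ be a vertex of $T$ of minimum in-degree. Then the subtournament $T[V_2(z)]$ induced by the in-neighborhood of $z$ is $\mathcal{T}_5$-free.
   Context: A triangle of a tournament is a set of three vertices inducing a directed 3-cycle. An unordered pair $ab$ of vertices is a diagonal if there exist vertices $u,v$ with $\{u,v,a\}$ and $\{u,v,b\}$ both triangles. A triangle is heavy if at least two of its pairs are diagonals; a tournament is light if it has no heavy triangle. $V_2(z)=\{v: (v,z)\in A(T)\}$. A feedback vertex set of a tournament is a vertex set whose removal leaves an acyclic tournament. $\mathcal{T}_5$ is the set of tournaments on 5 vertices whose minimum feedback vertex set has size 2; a tournament is $\mathcal{T}_5$-free if it has no subtournament isomorphic to a member of $\mathcal{T}_5$. *)

theory Defs
  imports Main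
begin

definition tournament :: "'a set \<Rightarrow> ('a \<times> 'a) set \<Rightarrow> bool" where
  "tournament V A \<longleftrightarrow> finite V \<and> A \<subseteq> V \<times> V \<and>
     (\<forall>v\<in>V. (v, v) \<notin> A) \<and>
     (\<forall>u\<in>V. \<forall>v\<in>V. u \<noteq> v \<longrightarrow> ((u, v) \<in> A \<longleftrightarrow> (v, u) \<notin> A))"

definition induced_arcs :: "('a \<times> 'a) set \<Rightarrow> 'a set \<Rightarrow> ('a \<times> 'a) set" where
  "induced_arcs A S = A \<inter> (S \<times> S)"

definition triangle :: "'a set \<Rightarrow> ('a \<times> 'a) set \<Rightarrow> 'a set \<Rightarrow> bool" where
  "triangle V A X \<longleftrightarrow> X \<subseteq> V \<and> (\<exists>x y z. X = {x, y, z} \<and> x \<noteq> y \<and> y \<noteq> z \<and> x \<noteq> z \<and>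
      (x, y) \<in> A \<and> (y, z) \<in> A \<and> (z, x) \<in> A)"

definition diagonal :: "'a set \<Rightarrow> ('a \<times> 'a) set \<Rightarrow> 'a \<Rightarrow> 'a \<Rightarrow> bool" where
  "diagonal V A a b \<longleftrightarrow> a \<in> V \<and> b \<in> V \<and> a \<noteq> b \<and>
     (\<exists>u v. triangle V A {u, v, a} \<and> triangle V A {u, v, b})"

definition heavy_triangle :: "'a set \<Rightarrow> ('a \<times> 'a) set \<Rightarrow> 'a set \<Rightarrow> bool" where
  "heavy_triangle V A X \<longleftrightarrow> triangle V A X \<and>
     card {P. P \<subseteq> X \<and> card P = 2 \<and> (\<exists>a b. P = {a, b} \<and> diagonal V A a b)} \<ge> 2"

definition light :: "'a set \<Rightarrow> ('a \<times> 'a) set \<Rightarrow> bool" where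
  "light V A \<longleftrightarrow> tournament V A \<and> \<not> (\<exists>X. heavy_triangle V A X)"

definition in_nbrs :: "'a set \<Rightarrow> ('a \<times> 'a) set \<Rightarrow> 'a \<Rightarrow> 'a set" where
  "in_nbrs V A z = {v \<in> V. (v, z) \<in> A}"

definition in_degree :: "'a set \<Rightarrow> ('a \<times> 'a) set \<Rightarrow> 'a \<Rightarrow> nat" where
  "in_degree V A z = card (in_nbrs V A z)"

definition feedback_vertex_set :: "'a set \<Rightarrow> ('a \<times> 'a) set \<Rightarrow> 'a set \<Rightarrow> bool" where
  "feedback_vertex_set V A F \<longleftrightarrow> F \<subseteq> V \<and> acyclic (induced_arcs A (V - F))"

definition min_fvs_size :: "'a set \<Rightarrow> ('a \<times> 'a) set \<Rightarrow> nat" where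
  "min_fvs_size V A = (LEAST k. \<exists>F. feedback_vertex_set V A F \<and> card F = k)"

definition in_T5 :: "'a set \<Rightarrow> ('a \<times> 'a) set \<Rightarrow> bool" where
  "in_T5 V A \<longleftrightarrow> tournament V A \<and> card V = 5 \<and> min_fvs_size V A = 2"

(* \<T>_5-free: no subtournament (on a vertex subset S) isomorphic to a member of \<T>_5.
   Since \<T>_5 is closed under isomorphism, this is: no induced subtournament lies in \<T>_5. *)
definition T5_free :: "'a set \<Rightarrow> ('a \<times> 'a) set \<Rightarrow> bool" where
  "T5_free V A \<longleftrightarrow> \<not> (\<exists>S. S \<subseteq> V \<and> in_T5 S (induced_arcs A S))"

end

theory Submission
  imports Defs
begin

text \<open>
  The in-neighbourhood of a vertex \<open>z\<close> of minimum in-degree is in fact transitive, hence every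
  subtournament of it has an empty feedback vertex set. Minimality of the in-degree gives every
  in-neighbour \<open>x\<close> of \<open>z\<close> a witness \<open>w\<close> with \<open>z \<rightarrow> w \<rightarrow> x\<close> (otherwise \<open>N\<^sup>-(x) \<subset> N\<^sup>-(z)\<close>). For a directed
  triangle \<open>u \<rightarrow> x \<rightarrow> y \<rightarrow> u\<close> inside \<open>N\<^sup>-(z)\<close>, the witnesses of its vertices first cannot beat
  both ends of an arc, and then the witnesses of \<open>u\<close> and \<open>x\<close> give, in either orientation of the
  arc between them, a triangle through \<open>z\<close> carrying two diagonals, contradicting lightness.
\<close>

lemma tournament_arc_in:
  "tournament V A \<Longrightarrow> (u, v) \<in> A \<Longrightarrow> u \<in> V \<and> v \<in> V"
  unfolding tournament_def by blast

lemma tournament_irrefl: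
  "tournament V A \<Longrightarrow> (v, v) \<notin> A"
  unfolding tournament_def by blast

lemma tournament_asym:
  "tournament V A \<Longrightarrow> (u, v) \<in> A \<Longrightarrow> (v, u) \<notin> A"
  unfolding tournament_def by (metis SigmaE prod.inject subsetD)

lemma tournament_total:
  "tournament V A \<Longrightarrow> u \<in> V \<Longrightarrow> v \<in> V \<Longrightarrow> u \<noteq> v \<Longrightarrow> (u, v) \<notin> A \<Longrightarrow> (v, u) \<in> A"
  unfolding tournament_def by blast

lemma triangle_of_cycle:
  assumes T: "tournament V A" and "(x, y) \<in> A" "(y, w) \<in> A" "(w, x) \<in> A"
  shows "triangle V A {x, y, w}"
proof -
  have "x \<noteq> y" "y \<noteq> w" "x \<noteq> w"
    using assms tournament_irrefl[OF T] tournament_asym[OF T] by metis+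
  with assms show ?thesis
    unfolding triangle_def using tournament_arc_in[OF T] by blast
qed

lemma triangle_card: "triangle V A X \<Longrightarrow> card X = 3"
  unfolding triangle_def by auto

lemma diagonal_sym: "diagonal V A a b \<Longrightarrow> diagonal V A b a"
  unfolding diagonal_def by blast

text \<open>Two triangles of a tournament through a pair \<open>{p, q}\<close> orient it the same way, so this
  covers every pair of triangles sharing \<open>{p, q}\<close>.\<close>

lemma diagonal_of_cycles_through_arc:
  assumes T: "tournament V A"
    and "(p, q) \<in> A" "(q, a) \<in> A" "(a, p) \<in> A" "(q, b) \<in> A" "(b, p) \<in> A" "a \<noteq> b"
  shows "diagonal V A a b"
proof -
  have "triangle V A {p, q, a}" "triangle V A {p, q, b}"
    using triangle_of_cycle[OF T] assms(2-6) by blast+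
  moreover have "a \<in> V" "b \<in> V"
    using tournament_arc_in[OF T] assms(3,5) by blast+
  ultimately show ?thesis
    unfolding diagonal_def using assms(7) by blast
qed

lemma heavy_triangle_of_two_diagonals:
  assumes "triangle V A {a, b, c}" "diagonal V A a b" "diagonal V A a c"
  shows "heavy_triangle V A {a, b, c}"
proof -
  let ?D = "{P. P \<subseteq> {a, b, c} \<and> card P = 2 \<and> (\<exists>p q. P = {p, q} \<and> diagonal V A p q)}"
  have "a \<noteq> b" "a \<noteq> c"
    using assms(2,3) unfolding diagonal_def by blast+
  have "b \<noteq> c"
  proof
    assume "b = c"
    then have "card {a, b, c} \<le> 2" by (simp add: card_insert_if)
    with triangle_card[OF assms(1)] show False by simp
  qed
  have "{{a, b}, {a, c}} \<subseteq> ?D"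
    using \<open>a \<noteq> b\<close> \<open>a \<noteq> c\<close> assms(2,3) by auto
  moreover have "finite ?D"
    by (rule finite_subset[of _ "Pow {a, b, c}"]) auto
  ultimately have "card {{a, b}, {a, c}} \<le> card ?D"
    by (simp add: card_mono)
  moreover have "card {{a, b}, {a, c}} = 2"
    using \<open>b \<noteq> c\<close> by (simp add: doubleton_eq_iff)
  ultimately have "2 \<le> card ?D"
    by simp
  with assms(1) show ?thesis
    unfolding heavy_triangle_def by simp
qed

lemma out_nbr_into_in_nbr_of_min_in_degree:
  assumes T: "tournament V A" and z: "z \<in> V"
    and min: "\<forall>v\<in>V. in_degree V A z \<le> in_degree V A v"
    and x: "(x, z) \<in> A"
  obtains w where "(z, w) \<in> A" "(w, x) \<in> A"
proof (rule ccontr)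
  assume no_w: "\<not> thesis"
  have xV: "x \<in> V" using tournament_arc_in[OF T x] by simp
  have fin: "finite (in_nbrs V A z)"
    using T unfolding tournament_def in_nbrs_def by simp
  have "in_nbrs V A x \<subseteq> in_nbrs V A z - {x}"
  proof
    fix w assume "w \<in> in_nbrs V A x"
    then have wV: "w \<in> V" and wx: "(w, x) \<in> A" unfolding in_nbrs_def by auto
    have "w \<noteq> x" "w \<noteq> z" "(z, w) \<notin> A"
      using wx x no_w that tournament_irrefl[OF T] tournament_asym[OF T] by metis+
    then show "w \<in> in_nbrs V A z - {x}"
      using tournament_total[OF T z wV] wV unfolding in_nbrs_def by auto
  qed
  then have "card (in_nbrs V A x) \<le> card (in_nbrs V A z - {x})"
    using fin by (intro card_mono) auto
  also have "\<dots> < card (in_nbrs V A z)"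
    using fin x xV by (intro card_Diff1_less) (auto simp: in_nbrs_def)
  finally show False
    using min xV unfolding in_degree_def by force
qed

lemma min_fvs_size_acyclic:
  assumes "acyclic R"
  shows "min_fvs_size S R = 0"
proof -
  have "feedback_vertex_set S R {}"
    using acyclic_subset[OF assms] unfolding feedback_vertex_set_def induced_arcs_def by blast
  then show ?thesis
    unfolding min_fvs_size_def by (intro Least_eq_0) auto
qed

locale light_min_in_degree =
  fixes V :: "'a set" and A :: "('a \<times> 'a) set" and z :: 'a
  assumes light: "light V A"
    and z_in: "z \<in> V"
    and min_in_degree: "\<forall>v\<in>V. in_degree V A z \<le> in_degree V A v"
begin

lemma tournament: "tournament V A"
  using light unfolding light_def by simp

lemma arc_neq: "(x, y) \<in> A \<Longrightarrow> x \<noteq> y"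
  using tournament_irrefl[OF tournament] by metis

lemma in_out_distinct: "(x, z) \<in> A \<Longrightarrow> (z, w) \<in> A \<Longrightarrow> x \<noteq> w"
  using tournament_asym[OF tournament] by metis

lemma in_out_total: "(x, z) \<in> A \<Longrightarrow> (z, w) \<in> A \<Longrightarrow> (x, w) \<notin> A \<Longrightarrow> (w, x) \<in> A"
  using tournament_total[OF tournament] tournament_arc_in[OF tournament] in_out_distinct
  by metis

lemma diagonal_of_cycles: "(p, q) \<in> A \<Longrightarrow> (q, a) \<in> A \<Longrightarrow> (a, p) \<in> A \<Longrightarrow> (q, b) \<in> A \<Longrightarrow> (b, p) \<in> A
    \<Longrightarrow> a \<noteq> b \<Longrightarrow> diagonal V A a b"
  by (rule diagonal_of_cycles_through_arc[OF tournament])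

lemma cycle_not_two_diagonals:
  assumes "(a, b) \<in> A" "(b, c) \<in> A" "(c, a) \<in> A" "diagonal V A a b" "diagonal V A a c"
  shows False
  using heavy_triangle_of_two_diagonals[OF triangle_of_cycle[OF tournament assms(1-3)]] assms(4,5)
    light unfolding light_def by blast

lemma in_nbr_witness:
  assumes "(x, z) \<in> A"
  obtains w where "(z, w) \<in> A" "(w, x) \<in> A"
  using out_nbr_into_in_nbr_of_min_in_degree[OF tournament z_in min_in_degree assms] by blast

lemma no_out_nbr_beats_arc:
  assumes D: "(p, z) \<in> A" "(q, z) \<in> A" "(r, z) \<in> A" "(p, q) \<in> A" "(q, r) \<in> A" "(r, p) \<in> A"
    and w: "(z, w) \<in> A" "(w, p) \<in> A" "(w, q) \<in> A"
  shows False
proof -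
  have pq: "diagonal V A p q"
    using diagonal_of_cycles[of z w p q] D w arc_neq by blast
  have rw: "(r, w) \<in> A"
  proof (rule ccontr)
    assume "(r, w) \<notin> A"
    then have "diagonal V A q r"
      using diagonal_of_cycles[of z w q r] in_out_total D w arc_neq by blast
    then show False
      using cycle_not_two_diagonals[OF D(5,6,4)] diagonal_sym[OF pq] by blast
  qed
  have pw: "diagonal V A p w"
    using diagonal_of_cycles[of q r p w] D w rw in_out_distinct by blast
  obtain w' where w': "(z, w') \<in> A" "(w', r) \<in> A" using in_nbr_witness D(3) by blast
  have "(p, w') \<in> A"
  proof (rule ccontr)
    assume "(p, w') \<notin> A"
    then have "diagonal V A p r"
      using diagonal_of_cycles[of z w' p r] in_out_total D w' arc_neq by blast
    then show False
      using cycle_not_two_diagonals[OF D(4,5,6)] pq by blast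
  qed
  then have "diagonal V A p z"
    using diagonal_of_cycles[of w' r p z] D w' in_out_distinct arc_neq by blast
  then show False
    using cycle_not_two_diagonals[OF D(1) w(1,2)] pw by blast
qed

lemma cycle_vertex_witness:
  assumes D: "(u, z) \<in> A" "(x, z) \<in> A" "(y, z) \<in> A" "(u, x) \<in> A" "(x, y) \<in> A" "(y, u) \<in> A"
    and w: "(z, w) \<in> A" "(w, u) \<in> A"
  shows "(x, w) \<in> A" "(y, w) \<in> A" "diagonal V A z x"
proof -
  show xw: "(x, w) \<in> A"
    using no_out_nbr_beats_arc[OF D w] in_out_total[OF D(2) w(1)] by blast
  show "(y, w) \<in> A"
    using no_out_nbr_beats_arc[OF D(3,1,2,6,4,5) w(1) _ w(2)] in_out_total[OF D(3) w(1)] by blast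
  show "diagonal V A z x"
    using diagonal_of_cycles[of w u z x] D w xw arc_neq by blast
qed

lemma in_nbrs_no_directed_triangle:
  assumes D: "(u, z) \<in> A" "(x, z) \<in> A" "(y, z) \<in> A" "(u, x) \<in> A" "(x, y) \<in> A" "(y, u) \<in> A"
  shows False
proof -
  obtain wu where wu: "(z, wu) \<in> A" "(wu, u) \<in> A" using in_nbr_witness D(1) by blast
  obtain wx where wx: "(z, wx) \<in> A" "(wx, x) \<in> A" using in_nbr_witness D(2) by blast
  obtain wy where wy: "(z, wy) \<in> A" "(wy, y) \<in> A" using in_nbr_witness D(3) by blast
  note u_rot = cycle_vertex_witness[OF D wu]
  note x_rot = cycle_vertex_witness[OF D(2,3,1,5,6,4) wx]
  note y_rot = cycle_vertex_witness[OF D(3,1,2,6,4,5) wy]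
  have "wu \<noteq> wx" using u_rot(1) wx(2) tournament_asym[OF tournament] by blast
  then consider "(wu, wx) \<in> A" | "(wx, wu) \<in> A"
    using tournament_total[OF tournament] tournament_arc_in[OF tournament] wu wx by metis
  then show False
  proof cases
    case 1
    have "diagonal V A z wu"
      using diagonal_of_cycles[of wx x z wu] D wx 1 u_rot(1) arc_neq[OF wu(1)] by blast
    then show False
      using cycle_not_two_diagonals[OF wu(1,2) D(1)] y_rot(3) by blast
  next
    case 2
    have "diagonal V A z wx"
      using diagonal_of_cycles[of wu u z wx] D wu 2 x_rot(2) arc_neq[OF wx(1)] by blast
    then show False
      using cycle_not_two_diagonals[OF wx(1,2) D(2)] u_rot(3) by blast
  qed
qed

lemma trans_in_nbrs: "trans (induced_arcs A (in_nbrs V A z))"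
proof (rule transI)
  fix x y w
  assume "(x, y) \<in> induced_arcs A (in_nbrs V A z)" "(y, w) \<in> induced_arcs A (in_nbrs V A z)"
  then have arcs: "(x, y) \<in> A" "(y, w) \<in> A" and in_z: "(x, z) \<in> A" "(y, z) \<in> A" "(w, z) \<in> A"
    and N: "x \<in> in_nbrs V A z" "w \<in> in_nbrs V A z"
    unfolding induced_arcs_def in_nbrs_def by auto
  have "(w, x) \<notin> A"
    using in_nbrs_no_directed_triangle[OF in_z arcs] by blast
  moreover have "x \<noteq> w" using arcs tournament_asym[OF tournament] by blast
  ultimately have "(x, w) \<in> A"
    using tournament_total[OF tournament] tournament_arc_in[OF tournament] in_z by metis
  with N show "(x, w) \<in> induced_arcs A (in_nbrs V A z)"
    unfolding induced_arcs_def by simp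
qed

lemma acyclic_in_nbrs: "acyclic (induced_arcs A (in_nbrs V A z))"
  unfolding acyclic_def trancl_id[OF trans_in_nbrs]
  using tournament_irrefl[OF tournament] by (simp add: induced_arcs_def)

end

theorem lemma6:
  fixes V :: "'a set" and A :: "('a \<times> 'a) set" and z :: 'a
  assumes "light V A"
    and "z \<in> V"
    and "\<forall>v\<in>V. in_degree V A z \<le> in_degree V A v"
  shows "T5_free (in_nbrs V A z) (induced_arcs A (in_nbrs V A z))"
proof -
  interpret light_min_in_degree V A z
    using assms by unfold_locales
  have "min_fvs_size S (induced_arcs (induced_arcs A (in_nbrs V A z)) S) = 0" for S
    by (rule min_fvs_size_acyclic, rule acyclic_subset[OF acyclic_in_nbrs])
      (auto simp: induced_arcs_def)
  then show ?thesis
    unfolding T5_free_def in_T5_def by simp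
qed

end
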